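(* For every $\zeta\in\{0,1\}^H$, every $L>0$ and every $K\ge L+2$: on the event that $D^\zeta_K$ is $L$-thin in $H$, we have $\Delta^\zeta\subset D^\zeta_K$. In particular, if $D^\zeta_K$ is $L$-thin in $H$, then $\Delta^\zeta$ is $L$-thin in $H$.
   Context: Fix $\lambda>0$, $d\ge2$, $H=\{0,1\}^d\subset\mathbb{Z}^d$; for $x\in H$ let $\mathcal{N}_{H,x}$ be the set of nearest neighbours of $x$ (in $\mathbb{Z}^d$) lying in $H$. Each site carries independent Poisson processes of rate $1$ (down marks) and rate $\lambda$ (up marks), independent over sites. For $\zeta\in\{0,1\}^H$, the threshold $2$ contact process $(\eta^\zeta_{H;t})_{t\ge0}$ on $H$ starts from $\zeta$; at a down mark at $x$ the spin becomes $0$; at an up mark at $x$ at time $t$ the spin becomes $1$ if at least $2$ sites of $\mathcal{N}_{H,x}$ are in state $1$ just before $t$. The independent flip process $(\pi^\zeta_{H;t})$ starts from $\zeta$ and sets the spin at $x$ to $0$ at each down mark and to $1$ at each up mark at $x$. $\Delta^\zeta=\bigcup_{t\in[0,d^2]}\{x\in H:\eta^\zeta_{H;t}(x)\ne\pi^\zeta_{H;t}(x)\}$. A site $x\in H$ is $(\zeta,K)$-dangerous if there is some $t\in[0,d^2]$ at which fewer than $K$ sites of $\mathcal{N}_{H,x}$ are in state $1$ in $\pi^\zeta_{H;t}$; $D^\zeta_K$ is the set of $(\zeta,K)$-dangerous sites. A set $S$ is $L$-thin in $H$ if $|S\cap\mathcal{N}_{H,x}|\le L$ for all $x\in H$. 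*)

theory Defs
  imports Complex_Main
begin

type_synonym site = "nat \<Rightarrow> int"
type_synonym config = "site \<Rightarrow> bool"   (* True = spin 1, False = spin 0 *)

definition cube :: "nat \<Rightarrow> site set" where
  "cube d = {x. (\<forall>i<d. x i = 0 \<or> x i = 1) \<and> (\<forall>i\<ge>d. x i = 0)}"

definition nbrs :: "nat \<Rightarrow> site \<Rightarrow> site set" where
  "nbrs d x = {y \<in> cube d. (\<Sum>i<d. \<bar>x i - y i\<bar>) = 1}"

text \<open>Almost-sure properties of a realisation of the Poisson clocks: mark times are
  positive, locally finite, and no two marks (of any type, at any sites of H) coincide.\<close>
definition generic_marks :: "nat \<Rightarrow> (site \<Rightarrow> real set) \<Rightarrow> (site \<Rightarrow> real set) \<Rightarrow> bool" where
  "generic_marks d dn up \<longleftrightarrow>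
     (\<forall>x\<in>cube d. dn x \<subseteq> {0<..} \<and> up x \<subseteq> {0<..}) \<and>
     (\<forall>x\<in>cube d. \<forall>t. finite (dn x \<inter> {..t}) \<and> finite (up x \<inter> {..t})) \<and>
     (\<forall>x\<in>cube d. \<forall>y\<in>cube d. dn x \<inter> up y = {} \<and>
        (x \<noteq> y \<longrightarrow> dn x \<inter> dn y = {} \<and> up x \<inter> up y = {}))"

definition mark_times :: "nat \<Rightarrow> (site \<Rightarrow> real set) \<Rightarrow> (site \<Rightarrow> real set) \<Rightarrow> real set" where
  "mark_times d dn up = (\<Union>x\<in>cube d. dn x \<union> up x)"

definition mark_step ::
  "nat \<Rightarrow> (site \<Rightarrow> real set) \<Rightarrow> (site \<Rightarrow> real set) \<Rightarrow> (config \<Rightarrow> site \<Rightarrow> bool)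
     \<Rightarrow> config \<Rightarrow> real \<Rightarrow> config" where
  "mark_step d dn up rule c tau =
     (\<lambda>x. if x \<in> cube d \<and> tau \<in> dn x then False
          else if x \<in> cube d \<and> tau \<in> up x then rule c x
          else c x)"

text \<open>State at time t: apply all marks in [0,t] in chronological order (right-continuous).\<close>
definition run ::
  "nat \<Rightarrow> (site \<Rightarrow> real set) \<Rightarrow> (site \<Rightarrow> real set) \<Rightarrow> (config \<Rightarrow> site \<Rightarrow> bool)
     \<Rightarrow> config \<Rightarrow> real \<Rightarrow> config" where
  "run d dn up rule \<zeta> t =
     foldl (mark_step d dn up rule) \<zeta> (sorted_list_of_set (mark_times d dn up \<inter> {0..t}))"

definition contact2 :: "nat \<Rightarrow> (site \<Rightarrow> real set) \<Rightarrow> (site \<Rightarrow> real set) \<Rightarrow> config \<Rightarrow> real \<Rightarrow> config" where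
  "contact2 d dn up \<zeta> t = run d dn up (\<lambda>c x. c x \<or> 2 \<le> card {y \<in> nbrs d x. c y}) \<zeta> t"

definition flipproc :: "nat \<Rightarrow> (site \<Rightarrow> real set) \<Rightarrow> (site \<Rightarrow> real set) \<Rightarrow> config \<Rightarrow> real \<Rightarrow> config" where
  "flipproc d dn up \<zeta> t = run d dn up (\<lambda>c x. True) \<zeta> t"

definition Delta :: "nat \<Rightarrow> (site \<Rightarrow> real set) \<Rightarrow> (site \<Rightarrow> real set) \<Rightarrow> config \<Rightarrow> site set" where
  "Delta d dn up \<zeta> = {x \<in> cube d. \<exists>t\<in>{0..real (d^2)}. contact2 d dn up \<zeta> t x \<noteq> flipproc d dn up \<zeta> t x}"

definition dangerous :: "nat \<Rightarrow> (site \<Rightarrow> real set) \<Rightarrow> (site \<Rightarrow> real set) \<Rightarrow> config \<Rightarrow> nat \<Rightarrow> site set" where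
  "dangerous d dn up \<zeta> K = {x \<in> cube d. \<exists>t\<in>{0..real (d^2)}. card {y \<in> nbrs d x. flipproc d dn up \<zeta> t y} < K}"

definition thin :: "nat \<Rightarrow> site set \<Rightarrow> nat \<Rightarrow> bool" where
  "thin d S L \<longleftrightarrow> (\<forall>x\<in>cube d. card (S \<inter> nbrs d x) \<le> L)"

end

theory Submission
  imports Defs
begin

text \<open>Call a site outside D safe if its flip-process neighbourhood always contains at least
  two more occupied sites than D has sites among its neighbours. Disagreements between the
  contact process and the flip process can only be created at up marks, and at a safe site
  the at most card(D \<inter> N(x)) disagreeing neighbours still leave two occupied neighbours
  in the contact process, so the up mark succeeds there as well. Hence, by induction over
  the marks in chronological order, contact process and flip process agree off D. With
  D the set of dangerous sites, every site outside D is safe once D is L-thin and K \<ge> L + 2.\<close>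

lemma cube_subset_indicators:
  "cube d \<subseteq> (\<lambda>S i. if i \<in> S then 1 else 0) ` Pow {..<d}"
proof
  fix x assume x: "x \<in> cube d"
  have "x = (\<lambda>i. if i \<in> {i. i < d \<and> x i = 1} then 1 else 0)"
  proof
    fix i show "x i = (if i \<in> {i. i < d \<and> x i = 1} then 1 else 0)"
      using x by (cases "i < d") (auto simp: cube_def)
  qed
  then show "x \<in> (\<lambda>S i. if i \<in> S then 1 else 0) ` Pow {..<d}"
    by blast
qed

lemma finite_cube: "finite (cube d)"
  by (rule finite_subset[OF cube_subset_indicators]) simp

lemma nbrs_subset_cube: "nbrs d x \<subseteq> cube d"
  unfolding nbrs_def by blast

lemma finite_nbrs: "finite (nbrs d x)"
  using finite_cube nbrs_subset_cube by (rule finite_subset[rotated])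

lemma finite_mark_times_upto:
  assumes "generic_marks d dn up"
  shows "finite (mark_times d dn up \<inter> {0..t})"
proof -
  have "mark_times d dn up \<inter> {0..t} \<subseteq> (\<Union>x\<in>cube d. (dn x \<inter> {..t}) \<union> (up x \<inter> {..t}))"
    by (auto simp: mark_times_def)
  moreover have "finite (\<Union>x\<in>cube d. (dn x \<inter> {..t}) \<union> (up x \<inter> {..t}))"
    using assms finite_cube by (auto simp: generic_marks_def)
  ultimately show ?thesis
    by (rule finite_subset)
qed

lemma mark_times_pos:
  assumes "generic_marks d dn up"
  shows "mark_times d dn up \<subseteq> {0<..}"
  using assms by (auto simp: generic_marks_def mark_times_def)

lemma run_no_marks:
  assumes "mark_times d dn up \<inter> {0..t} = {}"
  shows "run d dn up rule \<zeta> t = \<zeta>"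
  using assms by (simp add: run_def)

lemma run_last_mark:
  assumes gm: "generic_marks d dn up" and ne: "mark_times d dn up \<inter> {0..t} \<noteq> {}"
  shows "\<exists>s a. 0 \<le> s \<and> s \<le> t \<and>
    card (mark_times d dn up \<inter> {0..s}) < card (mark_times d dn up \<inter> {0..t}) \<and>
    (\<forall>rule \<zeta>. run d dn up rule \<zeta> t = mark_step d dn up rule (run d dn up rule \<zeta> s) a)"
proof -
  let ?M = "mark_times d dn up"
  let ?A = "?M \<inter> {0..t}"
  define a where "a = Max ?A"
  define A' where "A' = ?A - {a}"
  define s where "s = (if A' = {} then 0 else Max A')"
  have fin: "finite ?A"
    using gm by (rule finite_mark_times_upto)
  have a: "a \<in> ?A" "\<forall>b\<in>?A. b \<le> a"
    using fin ne by (simp_all add: a_def del: Int_iff)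
  have finA': "finite A'"
    using fin by (simp add: A'_def)
  have "0 \<le> s \<and> s \<le> t \<and> ?M \<inter> {0..s} = A'"
  proof (cases "A' = {}")
    case True
    then show "0 \<le> s \<and> s \<le> t \<and> ?M \<inter> {0..s} = A'"
      using mark_times_pos[OF gm] a by (auto simp: s_def)
  next
    case False
    then have m: "Max A' \<in> A'" "\<forall>b\<in>A'. b \<le> Max A'"
      using finA' by simp_all
    have A'_sub: "A' \<subseteq> ?A" and "\<forall>b\<in>A'. b < a"
      using a by (force simp: A'_def)+
    then have "?M \<inter> {0..Max A'} \<subseteq> A'"
      using m(1) a(2) by (fastforce simp: A'_def)
    then show "0 \<le> s \<and> s \<le> t \<and> ?M \<inter> {0..s} = A'"
      using False m A'_sub by (auto simp: s_def)
  qed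
  then have s: "0 \<le> s" "s \<le> t" and A': "?M \<inter> {0..s} = A'"
    by simp_all
  have "card A' < card ?A"
    unfolding A'_def using fin a(1) by (rule card_Diff1_less)
  then have card: "card (?M \<inter> {0..s}) < card ?A"
    by (simp add: A')
  have "sorted_list_of_set ?A = sorted_list_of_set (?M \<inter> {0..s}) @ [a]"
  proof -
    have "sorted_list_of_set ?A = insort a (sorted_list_of_set A')"
      using sorted_list_of_set_insert_remove[OF fin, of a] a(1)
      by (simp add: A'_def insert_absorb)
    also have "\<dots> = sorted_list_of_set A' @ [a]"
      using a finA' by (intro sorted_insort_is_snoc) (auto simp: A'_def)
    finally show ?thesis
      by (simp add: A')
  qed
  then have "\<forall>rule \<zeta>. run d dn up rule \<zeta> t = mark_step d dn up rule (run d dn up rule \<zeta> s) a"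
    by (simp add: run_def)
  with s card show ?thesis
    by blast
qed

lemma card_occupied_le:
  assumes "finite N" and "\<forall>y\<in>N - D. cp y \<longrightarrow> ce y"
  shows "card {y\<in>N. cp y} \<le> card {y\<in>N. ce y} + card (D \<inter> N)"
proof -
  have "card {y\<in>N. cp y} \<le> card ({y\<in>N. ce y} \<union> (D \<inter> N))"
    using assms by (intro card_mono) auto
  also have "\<dots> \<le> card {y\<in>N. ce y} + card (D \<inter> N)"
    by (rule card_Un_le)
  finally show ?thesis .
qed

lemma mark_step_contact_eq_flip_outside:
  assumes agree: "\<forall>y\<in>cube d - D. ce y = cp y"
    and safe: "\<forall>x\<in>cube d - D. card (D \<inter> nbrs d x) + 2 \<le> card {y\<in>nbrs d x. cp y}"
  shows "\<forall>y\<in>cube d - D.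
    mark_step d dn up (\<lambda>c x. c x \<or> 2 \<le> card {y \<in> nbrs d x. c y}) ce a y
      = mark_step d dn up (\<lambda>c x. True) cp a y"
proof
  fix x assume x: "x \<in> cube d - D"
  have "\<forall>y\<in>nbrs d x - D. cp y \<longrightarrow> ce y"
    using agree nbrs_subset_cube by blast
  then have "card {y\<in>nbrs d x. cp y} \<le> card {y\<in>nbrs d x. ce y} + card (D \<inter> nbrs d x)"
    by (rule card_occupied_le[OF finite_nbrs])
  moreover have "card (D \<inter> nbrs d x) + 2 \<le> card {y\<in>nbrs d x. cp y}"
    using safe x by blast
  ultimately have "2 \<le> card {y\<in>nbrs d x. ce y}"
    by linarith
  then show "mark_step d dn up (\<lambda>c x. c x \<or> 2 \<le> card {y \<in> nbrs d x. c y}) ce a x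
      = mark_step d dn up (\<lambda>c x. True) cp a x"
    using agree x by (simp add: mark_step_def)
qed

lemma contact2_eq_flipproc_outside:
  assumes gm: "generic_marks d dn up" and t: "t \<in> {0..T}"
    and safe: "\<forall>s\<in>{0..T}. \<forall>x\<in>cube d - D.
      card (D \<inter> nbrs d x) + 2 \<le> card {y\<in>nbrs d x. flipproc d dn up \<zeta> s y}"
  shows "\<forall>y\<in>cube d - D. contact2 d dn up \<zeta> t y = flipproc d dn up \<zeta> t y"
  using t
proof (induction "card (mark_times d dn up \<inter> {0..t})" arbitrary: t rule: less_induct)
  case less
  show ?case
  proof (cases "mark_times d dn up \<inter> {0..t} = {}")
    case True
    then show ?thesis
      by (simp add: contact2_def flipproc_def run_no_marks)
  next
    case False
    then obtain s a where s: "0 \<le> s" "s \<le> t"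
      and card: "card (mark_times d dn up \<inter> {0..s}) < card (mark_times d dn up \<inter> {0..t})"
      and run: "\<forall>rule \<xi>. run d dn up rule \<xi> t = mark_step d dn up rule (run d dn up rule \<xi> s) a"
      using run_last_mark[OF gm False] by blast
    have "s \<in> {0..T}"
      using s less.prems by simp
    then show ?thesis
      unfolding contact2_def flipproc_def run[rule_format]
      using less.hyps[OF card] safe
      by (intro mark_step_contact_eq_flip_outside) (simp_all add: contact2_def flipproc_def)
  qed
qed

lemma thin_subset: "S \<subseteq> S' \<Longrightarrow> thin d S' L \<Longrightarrow> thin d S L"
  unfolding thin_def by (meson Int_mono card_mono finite_Int finite_nbrs order_refl order_trans)

theorem lemma3p1:
  fixes d L K :: nat and \<zeta> :: config and dn up :: "site \<Rightarrow> real set"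
  assumes "d \<ge> 2" and "L > 0" and "K \<ge> L + 2"
    and "generic_marks d dn up"
    and "thin d (dangerous d dn up \<zeta> K) L"
  shows "Delta d dn up \<zeta> \<subseteq> dangerous d dn up \<zeta> K \<and> thin d (Delta d dn up \<zeta>) L"
proof -
  let ?D = "dangerous d dn up \<zeta> K"
  have safe: "\<forall>s\<in>{0..real (d^2)}. \<forall>x\<in>cube d - ?D.
      card (?D \<inter> nbrs d x) + 2 \<le> card {y\<in>nbrs d x. flipproc d dn up \<zeta> s y}"
    using assms(3,5) by (force simp: dangerous_def thin_def not_less)
  have "Delta d dn up \<zeta> \<subseteq> ?D"
  proof (intro subsetI)
    fix x assume "x \<in> Delta d dn up \<zeta>"
    then obtain t where "x \<in> cube d" "t \<in> {0..real (d^2)}"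
      and "contact2 d dn up \<zeta> t x \<noteq> flipproc d dn up \<zeta> t x"
      unfolding Delta_def by blast
    with contact2_eq_flipproc_outside[OF assms(4)] safe show "x \<in> ?D"
      by blast
  qed
  with assms(5) show ?thesis
    by (blast intro: thin_subset)
qed

end
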